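(* Let $\tilde f$ be analytic on $[-1,1]$ and let $F=[f_{k,\ell}]$ be the coefficient matrix of $f(t,s)=\tilde f(t)\Theta(t-s)$. For every fixed $m\in\mathbb{Z}$, $|f_{\ell+m,\ell}|=O(1/\ell)$ as $\ell\to\infty$.
   Context: Let $\{p_k\}_{k\ge0}$ be the orthonormal Legendre polynomials on $[-1,1]$: $p_k$ has exact degree $k$, positive leading coefficient, and $\int_{-1}^1 p_k(t)p_\ell(t)\,dt=\delta_{k\ell}$. Let $\Theta$ be the Heaviside function, $\Theta(x)=0$ for $x<0$ and $\Theta(x)=1$ for $x\ge0$. The coefficient matrix of a bounded function $h$ on $[-1,1]^2$ is the infinite matrix $H=[h_{k,\ell}]_{k,\ell\ge0}$ with $h_{k,\ell}=\int_{-1}^1\int_{-1}^1 h(\tau,\rho)p_k(\tau)p_\ell(\rho)\,d\rho\,d\tau$. *)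

theory Defs
  imports "HOL-Complex_Analysis.Complex_Analysis" "HOL-Computational_Algebra.Polynomial"
    "HOL-Library.Landau_Symbols"
begin

definition heaviside :: "real \<Rightarrow> real" where
  "heaviside x = (if x < 0 then 0 else 1)"

definition orthonormal_legendre :: "(nat \<Rightarrow> real poly) \<Rightarrow> bool" where
  "orthonormal_legendre p \<longleftrightarrow>
     (\<forall>k. degree (p k) = k \<and> lead_coeff (p k) > 0) \<and>
     (\<forall>k l. integral {-1..1} (\<lambda>t. poly (p k) t * poly (p l) t) = (if k = l then 1 else 0))"

definition coeff_matrix :: "(nat \<Rightarrow> real poly) \<Rightarrow> (real \<Rightarrow> real \<Rightarrow> real) \<Rightarrow> nat \<Rightarrow> nat \<Rightarrow> real" where
  "coeff_matrix p h k l =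
     integral {-1..1} (\<lambda>\<tau>. integral {-1..1} (\<lambda>\<rho>. h \<tau> \<rho> * poly (p k) \<tau> * poly (p l) \<rho>))"

definition real_analytic_on_interval :: "(real \<Rightarrow> real) \<Rightarrow> bool" where
  "real_analytic_on_interval f \<longleftrightarrow>
     (\<exists>g. g analytic_on (complex_of_real ` {-1..1}) \<and>
          (\<forall>x\<in>{-1..1}. g (complex_of_real x) = complex_of_real (f x)))"

end

theory Submission
  imports Defs
begin

text \<open>Integrating out the inner variable turns \<open>f\<^sub>k\<^sub>,\<^sub>l\<close> into
  \<open>\<integral> f p\<^sub>k P\<^sub>l\<close>, where \<open>P\<^sub>l\<close> is the primitive of \<open>p\<^sub>l\<close> vanishing at \<open>-1\<close>.
  For \<open>l \<ge> 1\<close> it also vanishes at \<open>1\<close>, so integration by parts gives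
  \<open>\<langle>P\<^sub>l, p\<^sub>j\<rangle> = -\<langle>p\<^sub>l, P\<^sub>j\<rangle>\<close>; by orthogonality only \<open>j = l \<plusminus> 1\<close> survive and
  \<open>P\<^sub>l = a p\<^sub>l\<^sub>+\<^sub>1 + b p\<^sub>l\<^sub>-\<^sub>1\<close>. Both coefficients are ratios of consecutive leading
  coefficients divided by \<open>l\<close> or \<open>l + 1\<close>, and such a ratio is \<open>\<langle>p\<^sub>j\<^sub>+\<^sub>1, x p\<^sub>j\<rangle> \<le> 1\<close>.
  Hence \<open>|f\<^sub>k\<^sub>,\<^sub>l| \<le> 2 max |f| / l\<close> uniformly in \<open>k\<close>; analyticity is only used
  through continuity.\<close>

definition poly_antideriv :: "'a::field_char_0 poly \<Rightarrow> 'a poly" where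
  "poly_antideriv q = (\<Sum>i\<le>degree q. monom (coeff q i / of_nat (Suc i)) (Suc i))"

lemma coeff_poly_antideriv_Suc: "coeff (poly_antideriv q) (Suc n) = coeff q n / of_nat (Suc n)"
  unfolding poly_antideriv_def coeff_sum coeff_monom
  by (cases "n \<le> degree q") (auto simp: coeff_eq_0)

lemma pderiv_poly_antideriv: "pderiv (poly_antideriv q) = q"
  by (rule poly_eqI) (simp add: coeff_pderiv coeff_poly_antideriv_Suc del: of_nat_Suc)

lemma degree_poly_antideriv_le: "degree (poly_antideriv q) \<le> Suc (degree q)"
  unfolding poly_antideriv_def
  by (rule degree_sum_le) (auto intro: order_trans[OF degree_monom_le])

definition poly_primitive :: "real poly \<Rightarrow> real poly" where
  "poly_primitive q = poly_antideriv q - [:poly (poly_antideriv q) (-1):]"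

lemma pderiv_poly_primitive: "pderiv (poly_primitive q) = q"
  unfolding poly_primitive_def by (simp add: pderiv_diff pderiv_poly_antideriv pderiv_pCons)

lemma poly_primitive_minus_one: "poly (poly_primitive q) (-1) = 0"
  unfolding poly_primitive_def by simp

lemma degree_poly_primitive_le: "degree (poly_primitive q) \<le> Suc (degree q)"
  unfolding poly_primitive_def
  using degree_diff_le[OF degree_poly_antideriv_le, of "[:_:]"] by simp

lemma coeff_poly_primitive_Suc_degree:
  "coeff (poly_primitive q) (Suc (degree q)) = lead_coeff q / real (Suc (degree q))"
  unfolding poly_primitive_def by (simp add: coeff_poly_antideriv_Suc)

lemma integral_poly_pderiv:
  fixes A :: "real poly"
  assumes "a \<le> b"
  shows "integral {a..b} (poly (pderiv A)) = poly A b - poly A a"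
proof (rule integral_unique, rule fundamental_theorem_of_calculus)
  show "\<And>x. x \<in> {a..b} \<Longrightarrow> (poly A has_vector_derivative poly (pderiv A) x) (at x within {a..b})"
    by (auto simp: has_real_derivative_iff_has_vector_derivative[symmetric]
             intro!: DERIV_subset[OF poly_DERIV])
qed (fact assms)

lemma integral_poly_primitive:
  "-1 \<le> x \<Longrightarrow> integral {-1..x} (poly q) = poly (poly_primitive q) x"
  using integral_poly_pderiv[of "-1" x "poly_primitive q"]
  by (simp add: pderiv_poly_primitive poly_primitive_minus_one)

definition poly_inner :: "real poly \<Rightarrow> real poly \<Rightarrow> real" where
  "poly_inner a b = integral {-1..1} (\<lambda>t. poly a t * poly b t)"

lemma integrable_poly_mult: "(\<lambda>t. poly a t * poly b t) integrable_on {-1..1::real}"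
  by (intro integrable_continuous_real continuous_intros)

lemma poly_inner_commute: "poly_inner a b = poly_inner b a"
  unfolding poly_inner_def by (simp add: mult.commute)

lemma poly_inner_add_right: "poly_inner a (b + c) = poly_inner a b + poly_inner a c"
  unfolding poly_inner_def
  by (simp add: distrib_left integral_add[OF integrable_poly_mult integrable_poly_mult])

lemma poly_inner_diff_right: "poly_inner a (b - c) = poly_inner a b - poly_inner a c"
  unfolding poly_inner_def
  by (simp add: right_diff_distrib integral_diff[OF integrable_poly_mult integrable_poly_mult])

lemma poly_inner_smult_right: "poly_inner a (smult c b) = c * poly_inner a b"
  unfolding poly_inner_def by (simp add: mult.left_commute)

lemma poly_inner_zero_right [simp]: "poly_inner a 0 = 0"
  unfolding poly_inner_def by simp

lemma poly_inner_primitive_by_parts: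
  "poly_inner (poly_primitive a) b + poly_inner a (poly_primitive b)
     = poly (poly_primitive a) 1 * poly (poly_primitive b) 1"
proof -
  let ?P = "poly_primitive a * poly_primitive b"
  have "integral {-1..1} (poly (pderiv ?P)) = poly ?P 1"
    using integral_poly_pderiv[of "-1" 1 ?P] by (simp add: poly_primitive_minus_one)
  moreover have "integral {-1..1} (poly (pderiv ?P))
      = poly_inner (poly_primitive a) b + poly_inner a (poly_primitive b)"
    unfolding poly_inner_def pderiv_mult pderiv_poly_primitive poly_add poly_mult
    by (subst integral_add[OF integrable_poly_mult integrable_poly_mult, symmetric])
       (simp add: mult.commute)
  ultimately show ?thesis by simp
qed

lemma real_analytic_on_interval_imp_continuous_on:
  assumes "real_analytic_on_interval f"
  shows "continuous_on {-1..1} f"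
proof -
  obtain g where g: "g analytic_on (complex_of_real ` {-1..1})"
    and g_f: "\<forall>x\<in>{-1..1}. g (complex_of_real x) = complex_of_real (f x)"
    using assms unfolding real_analytic_on_interval_def by blast
  have g_cont: "continuous_on (complex_of_real ` {-1..1}) g"
    by (rule holomorphic_on_imp_continuous_on[OF analytic_imp_holomorphic[OF g]])
  have "continuous_on {-1..1} (\<lambda>x. Re (g (complex_of_real x)))"
    by (intro continuous_intros continuous_on_compose2[OF g_cont]) auto
  moreover have "Re (g (complex_of_real x)) = f x" if "x \<in> {-1..1}" for x
    using g_f that by simp
  ultimately show ?thesis
    by (rule continuous_on_eq)
qed

lemma coeff_matrix_heaviside:
  "coeff_matrix p (\<lambda>t s. f t * heaviside (t - s)) k l
     = integral {-1..1} (\<lambda>t. f t * poly (p k) t * poly (poly_primitive (p l)) t)"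
  unfolding coeff_matrix_def
proof (rule Henstock_Kurzweil_Integration.integral_cong)
  fix t :: real assume t: "t \<in> {-1..1}"
  have "integral {-1..1} (\<lambda>s. f t * heaviside (t - s) * poly (p k) t * poly (p l) s)
      = integral {-1..1} (\<lambda>s. f t * poly (p k) t * (if s \<in> {-1..t} then poly (p l) s else 0))"
    by (rule Henstock_Kurzweil_Integration.integral_cong) (auto simp: heaviside_def)
  also have "\<dots> = f t * poly (p k) t * integral {-1..1} (\<lambda>s. if s \<in> {-1..t} then poly (p l) s else 0)"
    by (rule integral_mult_right)
  also have "integral {-1..1} (\<lambda>s. if s \<in> {-1..t} then poly (p l) s else 0)
      = integral ({-1..t} \<inter> {-1..1}) (poly (p l))"
    by (rule integral_restrict_Int)
  also have "{-1..t} \<inter> {-1..1} = {-1..t}"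
    using t by auto
  finally show "integral {-1..1} (\<lambda>s. f t * heaviside (t - s) * poly (p k) t * poly (p l) s)
      = f t * poly (p k) t * poly (poly_primitive (p l)) t"
    using t by (simp add: integral_poly_primitive)
qed

locale legendre_system =
  fixes p :: "nat \<Rightarrow> real poly"
  assumes orthonormal: "orthonormal_legendre p"
begin

lemma degree_p [simp]: "degree (p k) = k"
  and lead_coeff_p_pos: "lead_coeff (p k) > 0"
  using orthonormal unfolding orthonormal_legendre_def by blast+

lemma poly_inner_p_p: "poly_inner (p k) (p l) = (if k = l then 1 else 0)"
  using orthonormal unfolding orthonormal_legendre_def poly_inner_def by blast

definition strip_top :: "nat \<Rightarrow> real poly \<Rightarrow> real poly" where
  "strip_top k q = q - smult (coeff q k / lead_coeff (p k)) (p k)"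

lemma poly_inner_strip_top:
  "poly_inner r q = poly_inner r (strip_top k q) + coeff q k / lead_coeff (p k) * poly_inner r (p k)"
  unfolding strip_top_def by (simp add: poly_inner_diff_right poly_inner_smult_right)

lemma degree_strip_top_le:
  assumes "degree q \<le> Suc n"
  shows "degree (strip_top (Suc n) q) \<le> n"
proof (rule degree_le, intro allI impI)
  fix i assume "n < i"
  have "degree (strip_top (Suc n) q) \<le> Suc n"
    unfolding strip_top_def using assms
    by (metis degree_p degree_diff_le degree_smult_le)
  moreover have "coeff (strip_top (Suc n) q) (Suc n) = 0"
    unfolding strip_top_def using lead_coeff_p_pos[of "Suc n"] by simp
  ultimately show "coeff (strip_top (Suc n) q) i = 0"
    using \<open>n < i\<close> by (cases "i = Suc n") (auto intro: coeff_eq_0)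
qed

lemma strip_top_0: "degree q = 0 \<Longrightarrow> strip_top 0 q = 0"
proof -
  assume "degree q = 0"
  then obtain c where "q = [:c:]"
    by (metis degree_0_id)
  moreover obtain d where "p 0 = [:d:]"
    by (metis degree_0_id degree_p)
  moreover have "d \<noteq> 0"
    using lead_coeff_p_pos[of 0] calculation by auto
  ultimately show ?thesis
    unfolding strip_top_def by simp
qed

lemma poly_inner_p_degree_less:
  assumes "degree q < k"
  shows "poly_inner (p k) q = 0"
proof -
  have "poly_inner (p k) q = 0" if "degree q \<le> n" "n < k" for n q
    using that
  proof (induction n arbitrary: q)
    case 0
    then show ?case
      using poly_inner_strip_top[of "p k" q 0] strip_top_0[of q] by (simp add: poly_inner_p_p)
  next
    case (Suc n)
    then have "poly_inner (p k) (strip_top (Suc n) q) = 0"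
      using degree_strip_top_le[of q n] by simp
    then show ?case
      using poly_inner_strip_top[of "p k" q "Suc n"] Suc.prems(2) by (simp add: poly_inner_p_p)
  qed
  then show ?thesis
    using assms by blast
qed

lemma poly_inner_p_degree_le:
  assumes "degree q \<le> k"
  shows "poly_inner (p k) q = coeff q k / lead_coeff (p k)"
proof -
  have "poly_inner (p k) (strip_top k q) = 0"
  proof (cases k)
    case 0
    then show ?thesis
      using assms strip_top_0[of q] by simp
  next
    case (Suc n)
    then show ?thesis
      using assms degree_strip_top_le[of q n] by (simp add: poly_inner_p_degree_less)
  qed
  then show ?thesis
    using poly_inner_strip_top[of "p k" q k] by (simp add: poly_inner_p_p)
qed

lemma eq_0_if_orthogonal_to_p:
  "degree q \<le> n \<Longrightarrow> (\<And>j. j \<le> n \<Longrightarrow> poly_inner (p j) q = 0) \<Longrightarrow> q = 0"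
proof (induction n arbitrary: q)
  case 0
  then have "coeff q 0 = 0"
    using poly_inner_p_degree_le[of q 0] lead_coeff_p_pos[of 0] by simp
  then show ?case
    using "0.prems"(1) by (metis degree_0_id le_zero_eq pCons_0_0)
next
  case (Suc n)
  then have "coeff q (Suc n) = 0"
    using poly_inner_p_degree_le[of q "Suc n"] lead_coeff_p_pos[of "Suc n"] by simp
  then have "degree q \<le> n"
    using Suc.prems(1) degree_strip_top_le[of q n] by (simp add: strip_top_def)
  then show ?case
    using Suc by simp
qed

lemma abs_integral_mult_p_p_le:
  assumes "continuous_on {-1..1} h" and h_le: "\<And>t. t \<in> {-1..1} \<Longrightarrow> \<bar>h t\<bar> \<le> M"
  shows "\<bar>integral {-1..1} (\<lambda>t. h t * poly (p k) t * poly (p j) t)\<bar> \<le> M"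
proof -
  have "0 \<le> M"
    using h_le[of 0] by simp
  let ?g = "\<lambda>t. M / 2 * (poly (p k) t * poly (p k) t + poly (p j) t * poly (p j) t)"
  have "norm (integral {-1..1} (\<lambda>t. h t * poly (p k) t * poly (p j) t)) \<le> integral {-1..1} ?g"
  proof (rule integral_norm_bound_integral)
    show "(\<lambda>t. h t * poly (p k) t * poly (p j) t) integrable_on {-1..1}"
      by (intro integrable_continuous_real continuous_intros assms)
    show "?g integrable_on {-1..1}"
      by (intro integrable_continuous_real continuous_intros)
    fix t :: real assume t: "t \<in> {-1..1}"
    let ?a = "poly (p k) t" and ?b = "poly (p j) t"
    have "2 * \<bar>?a\<bar> * \<bar>?b\<bar> \<le> \<bar>?a\<bar>\<^sup>2 + \<bar>?b\<bar>\<^sup>2"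
      by (rule sum_squares_bound)
    then have "\<bar>?a * ?b\<bar> \<le> (?a * ?a + ?b * ?b) / 2"
      by (simp add: abs_mult power2_eq_square)
    then have "\<bar>h t\<bar> * \<bar>?a * ?b\<bar> \<le> M * ((?a * ?a + ?b * ?b) / 2)"
      using h_le[OF t] \<open>0 \<le> M\<close> by (intro mult_mono) auto
    then show "norm (h t * ?a * ?b) \<le> ?g t"
      by (simp add: abs_mult mult.assoc)
  qed
  also have "integral {-1..1} ?g = M / 2 * (poly_inner (p k) (p k) + poly_inner (p j) (p j))"
    unfolding poly_inner_def by (simp add: integral_add[OF integrable_poly_mult integrable_poly_mult])
  also have "\<dots> = M"
    by (simp add: poly_inner_p_p)
  finally show ?thesis
    by simp
qed

lemma lead_coeff_p_ratio_le: "lead_coeff (p n) / lead_coeff (p (Suc n)) \<le> 1"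
proof -
  have "lead_coeff (p n) / lead_coeff (p (Suc n)) = poly_inner (p (Suc n)) (pCons 0 (p n))"
    using poly_inner_p_degree_le[of "pCons 0 (p n)" "Suc n"] by simp
  also have "\<dots> = integral {-1..1} (\<lambda>t. t * poly (p n) t * poly (p (Suc n)) t)"
    unfolding poly_inner_def by (simp add: mult_ac)
  also have "\<dots> \<le> 1"
    using abs_integral_mult_p_p_le[of "\<lambda>t. t" 1 n "Suc n"]
    by (simp add: abs_le_iff)
  finally show ?thesis .
qed

lemma abs_poly_inner_p_Suc_primitive_le:
  "\<bar>poly_inner (p (Suc j)) (poly_primitive (p j))\<bar> \<le> 1 / real (Suc j)"
proof -
  define r where "r = lead_coeff (p j) / lead_coeff (p (Suc j))"
  have "poly_inner (p (Suc j)) (poly_primitive (p j)) = r / real (Suc j)"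
    using poly_inner_p_degree_le[OF degree_poly_primitive_le[of "p j"]]
      coeff_poly_primitive_Suc_degree[of "p j"]
    by (simp add: r_def)
  moreover have "0 \<le> r"
    using lead_coeff_p_pos[of j] lead_coeff_p_pos[of "Suc j"] by (simp add: r_def)
  moreover have "r \<le> 1"
    unfolding r_def by (rule lead_coeff_p_ratio_le)
  ultimately show ?thesis
    by (simp add: divide_right_mono)
qed

lemma poly_primitive_p_one: "0 < l \<Longrightarrow> poly (poly_primitive (p l)) 1 = 0"
  using integral_poly_primitive[of 1 "p l"] poly_inner_p_degree_less[of "[:1:]" l]
  by (simp add: poly_inner_def)

lemma poly_inner_primitive_p_swap:
  "0 < l \<Longrightarrow> poly_inner (poly_primitive (p l)) (p j) = - poly_inner (p l) (poly_primitive (p j))"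
  using poly_inner_primitive_by_parts[of "p l" "p j"] poly_primitive_p_one[of l] by simp

lemma poly_primitive_p_Suc_eq:
  fixes n :: nat
  defines "a \<equiv> poly_inner (p (Suc (Suc n))) (poly_primitive (p (Suc n)))"
    and "b \<equiv> poly_inner (p (Suc n)) (poly_primitive (p n))"
  shows "poly_primitive (p (Suc n)) = smult a (p (Suc (Suc n))) - smult b (p n)"
proof -
  let ?P = "poly_primitive (p (Suc n))"
  define S where "S = ?P - smult a (p (Suc (Suc n))) + smult b (p n)"
  have inner_P: "poly_inner (p j) ?P = - poly_inner (p (Suc n)) (poly_primitive (p j))" for j
    using poly_inner_primitive_p_swap[of "Suc n" j] by (simp add: poly_inner_commute)
  have inner_S: "poly_inner (p j) S = poly_inner (p j) ?P
      - a * poly_inner (p j) (p (Suc (Suc n))) + b * poly_inner (p j) (p n)" for j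
    unfolding S_def by (simp add: poly_inner_add_right poly_inner_diff_right poly_inner_smult_right)
  have "degree S \<le> Suc (Suc n)"
    unfolding S_def using degree_poly_primitive_le[of "p (Suc n)"]
    by (intro degree_add_le degree_diff_le) (auto intro: order_trans[OF degree_smult_le])
  then have "S = 0"
  proof (rule eq_0_if_orthogonal_to_p)
    fix j assume "j \<le> Suc (Suc n)"
    then consider "j = Suc (Suc n)" | "j = Suc n" | "j = n" | "j < n"
      by linarith
    then show "poly_inner (p j) S = 0"
    proof cases
      case 1
      then show ?thesis
        using inner_S[of j] by (simp add: poly_inner_p_p a_def)
    next
      case 2
      have "poly_inner (p (Suc n)) ?P = 0"
        using inner_P[of "Suc n"] by linarith
      then show ?thesis
        using 2 inner_S[of j] by (simp add: poly_inner_p_p)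
    next
      case 3
      then show ?thesis
        using inner_S[of j] inner_P[of j] by (simp add: poly_inner_p_p b_def)
    next
      case 4
      then have "poly_inner (p (Suc n)) (poly_primitive (p j)) = 0"
        using degree_poly_primitive_le[of "p j"] by (intro poly_inner_p_degree_less) simp
      then show ?thesis
        using 4 inner_S[of j] inner_P[of j] by (simp add: poly_inner_p_p)
    qed
  qed
  then show ?thesis
    unfolding S_def by (simp add: algebra_simps)
qed

lemma abs_coeff_matrix_heaviside_le:
  assumes f_cont: "continuous_on {-1..1} f" and f_le: "\<And>t. t \<in> {-1..1} \<Longrightarrow> \<bar>f t\<bar> \<le> M"
  shows "\<bar>coeff_matrix p (\<lambda>t s. f t * heaviside (t - s)) k (Suc n)\<bar> \<le> 2 * M / real (Suc n)"
proof -
  define a where "a = poly_inner (p (Suc (Suc n))) (poly_primitive (p (Suc n)))"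
  define b where "b = poly_inner (p (Suc n)) (poly_primitive (p n))"
  define I where "I j = integral {-1..1} (\<lambda>t. f t * poly (p k) t * poly (p j) t)" for j
  have P_eq: "poly_primitive (p (Suc n)) = smult a (p (Suc (Suc n))) - smult b (p n)"
    unfolding a_def b_def by (rule poly_primitive_p_Suc_eq)
  have "coeff_matrix p (\<lambda>t s. f t * heaviside (t - s)) k (Suc n)
      = integral {-1..1} (\<lambda>t. a * (f t * poly (p k) t * poly (p (Suc (Suc n))) t)
                               - b * (f t * poly (p k) t * poly (p n) t))"
    unfolding coeff_matrix_heaviside P_eq by (simp add: algebra_simps)
  also have "\<dots> = a * I (Suc (Suc n)) - b * I n"
    unfolding I_def
    by (subst integral_diff; (intro integrable_continuous_real continuous_intros f_cont)?) simp
  finally have F_eq: "coeff_matrix p (\<lambda>t s. f t * heaviside (t - s)) k (Suc n)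
      = a * I (Suc (Suc n)) - b * I n" .
  have I_le: "\<bar>I j\<bar> \<le> M" for j
    unfolding I_def by (rule abs_integral_mult_p_p_le[OF f_cont f_le])
  have "\<bar>a\<bar> \<le> 1 / real (Suc n)"
    using abs_poly_inner_p_Suc_primitive_le[of "Suc n"] unfolding a_def
    by (rule order_trans) (simp add: frac_le)
  moreover have "\<bar>b\<bar> \<le> 1 / real (Suc n)"
    unfolding b_def by (rule abs_poly_inner_p_Suc_primitive_le)
  moreover have "0 \<le> M"
    using f_le[of 0] by simp
  ultimately have "\<bar>a\<bar> * \<bar>I (Suc (Suc n))\<bar> + \<bar>b\<bar> * \<bar>I n\<bar>
      \<le> 1 / real (Suc n) * M + 1 / real (Suc n) * M"
    by (intro add_mono mult_mono I_le) auto
  moreover have "\<bar>a * I (Suc (Suc n)) - b * I n\<bar> \<le> \<bar>a\<bar> * \<bar>I (Suc (Suc n))\<bar> + \<bar>b\<bar> * \<bar>I n\<bar>"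
    unfolding abs_mult[symmetric] by (rule abs_triangle_ineq4)
  ultimately show ?thesis
    unfolding F_eq by simp
qed

end

theorem corollary3p3:
  fixes ft :: "real \<Rightarrow> real" and p :: "nat \<Rightarrow> real poly" and m :: int
  assumes "orthonormal_legendre p"
    and "real_analytic_on_interval ft"
  shows "(\<lambda>l::nat. \<bar>coeff_matrix p (\<lambda>t s. ft t * heaviside (t - s)) (nat (int l + m)) l\<bar>)
           \<in> O(\<lambda>l. 1 / real l)"
proof -
  interpret legendre_system p
    by unfold_locales (fact assms(1))
  have ft_cont: "continuous_on {-1..1} ft"
    using assms(2) by (rule real_analytic_on_interval_imp_continuous_on)
  then obtain M where M: "\<And>t. t \<in> {-1..1} \<Longrightarrow> \<bar>ft t\<bar> \<le> M"
    using continuous_on_compact_bound[OF compact_Icc] by (metis real_norm_def)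
  have "\<bar>coeff_matrix p (\<lambda>t s. ft t * heaviside (t - s)) k l\<bar> \<le> 2 * M * (1 / real l)"
    if "l \<ge> 1" for k l
    using abs_coeff_matrix_heaviside_le[OF ft_cont M, of k "l - 1"] that by simp
  then show ?thesis
    by (intro bigoI[where c = "2 * M"]) (auto simp: eventually_at_top_linorder)
qed

end
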